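(* For every set $\theta$ of edges of $G$, $H$ is constant on each connected component of $\Gamma_\theta=\{x\in\Gamma: E_x=\theta\}$, where $E_x=\{\{i,j\}\in E: x_{ij}>0\}$.
   Context: Let $G=(\mathbb{V},E)$ be a finite graph with adjacency $\sim$ and edge set $E$. Let $a_{ij}=a_{ji}\ge0$ ($>0$ only if $i\sim j$) and $p_{ij}=p_{ji}\in[0,1]$ ($=0$ if $i\not\sim j$), with some $a_{ij}p_{ij}>0$. Fix $h_1\in(0,1]$; $\Delta$ is the set of arrays $x=(x_{ij})$ with $x_{ij}=x_{ji}\ge0$, $x_{ij}=0$ if $i\not\sim j$, $\sum_{i,j}x_{ij}=1$, $\sum_{(i,j):a_{ij}p_{ij}>0}x_{ij}\ge h_1$; $x_i=\sum_jx_{ij}$. $H(x)=\sum_{(i,j):x_{ij}>0}a_{ij}p_{ij}x_{ij}^2/(x_ix_j)$; $F(x)_{ij}=x_{ij}\big(a_{ij}p_{ij}\frac{x_{ij}}{x_ix_j}-H(x)\big)$, with $F_{ij}=0$ if $x_{ij}=0$ and $a_{ij}p_{ij}x_{ij}/(x_ix_j):=0$ if $a_{ij}p_{ij}=0$. $\Gamma=\{x\in\Delta:F(x)=0\}$. *)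

theory Defs
  imports "HOL-Analysis.Analysis"
begin

text \<open>Vertices form a finite type 'v; arrays x = (x_ij) are functions on ordered pairs,
  carrying the product (= Euclidean) topology. adj is the adjacency relation of G.\<close>

definition marg :: "('v::finite \<times> 'v \<Rightarrow> real) \<Rightarrow> 'v \<Rightarrow> real" where
  "marg x i = (\<Sum>j\<in>UNIV. x (i, j))"

definition Hfun :: "('v::finite \<times> 'v \<Rightarrow> real) \<Rightarrow> ('v \<times> 'v \<Rightarrow> real)
    \<Rightarrow> ('v \<times> 'v \<Rightarrow> real) \<Rightarrow> real" where
  "Hfun a p x = (\<Sum>(i, j)\<in>{(i, j). x (i, j) > 0}.
      a (i, j) * p (i, j) * (x (i, j))^2 / (marg x i * marg x j))"

definition Ffun :: "('v::finite \<times> 'v \<Rightarrow> real) \<Rightarrow> ('v \<times> 'v \<Rightarrow> real)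
    \<Rightarrow> ('v \<times> 'v \<Rightarrow> real) \<Rightarrow> ('v \<times> 'v \<Rightarrow> real)" where
  "Ffun a p x = (\<lambda>(i, j). if x (i, j) = 0 then 0
      else x (i, j) * (a (i, j) * p (i, j) * x (i, j) / (marg x i * marg x j) - Hfun a p x))"

definition Delta :: "('v::finite \<Rightarrow> 'v \<Rightarrow> bool) \<Rightarrow> ('v \<times> 'v \<Rightarrow> real)
    \<Rightarrow> ('v \<times> 'v \<Rightarrow> real) \<Rightarrow> real \<Rightarrow> ('v \<times> 'v \<Rightarrow> real) set" where
  "Delta adj a p h1 = {x. (\<forall>i j. x (i, j) = x (j, i)) \<and> (\<forall>i j. x (i, j) \<ge> 0)
      \<and> (\<forall>i j. \<not> adj i j \<longrightarrow> x (i, j) = 0)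
      \<and> (\<Sum>ij\<in>UNIV. x ij) = 1
      \<and> (\<Sum>ij\<in>{ij. a ij * p ij > 0}. x ij) \<ge> h1}"

definition Gamma :: "('v::finite \<Rightarrow> 'v \<Rightarrow> bool) \<Rightarrow> ('v \<times> 'v \<Rightarrow> real)
    \<Rightarrow> ('v \<times> 'v \<Rightarrow> real) \<Rightarrow> real \<Rightarrow> ('v \<times> 'v \<Rightarrow> real) set" where
  "Gamma adj a p h1 = {x \<in> Delta adj a p h1. Ffun a p x = (\<lambda>_. 0)}"

definition edge_set :: "('v \<Rightarrow> 'v \<Rightarrow> bool) \<Rightarrow> 'v set set" where
  "edge_set adj = {{i, j} | i j. adj i j}"

definition supp_edges :: "('v \<Rightarrow> 'v \<Rightarrow> bool) \<Rightarrow> ('v \<times> 'v \<Rightarrow> real) \<Rightarrow> 'v set set" where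
  "supp_edges adj x = {{i, j} | i j. adj i j \<and> x (i, j) > 0}"

definition Gamma_theta :: "('v::finite \<Rightarrow> 'v \<Rightarrow> bool) \<Rightarrow> ('v \<times> 'v \<Rightarrow> real)
    \<Rightarrow> ('v \<times> 'v \<Rightarrow> real) \<Rightarrow> real \<Rightarrow> 'v set set \<Rightarrow> ('v \<times> 'v \<Rightarrow> real) set" where
  "Gamma_theta adj a p h1 \<theta> = {x \<in> Gamma adj a p h1. supp_edges adj x = \<theta>}"

end

theory Submission
  imports Defs
begin

text \<open>With \<open>c\<^sub>i\<^sub>j = a\<^sub>i\<^sub>j p\<^sub>i\<^sub>j\<close>, the equilibrium
  condition at \<open>y\<close> reads \<open>c\<^sub>i\<^sub>j y\<^sub>i\<^sub>j = H(y) y\<^sub>i y\<^sub>j\<close> on \<open>S\<close>. So for every \<open>x \<in> \<Delta>\<close> supported in \<open>S\<close>,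
  summing \<open>x\<^sub>i y\<^sub>i\<^sub>j / y\<^sub>i\<close> over \<open>S\<close> shows that \<open>H(y)\<close> times the cross sum of \<open>x\<^sub>i y\<^sub>j / c\<^sub>i\<^sub>j\<close> over
  \<open>S\<close> equals \<open>\<Sum>\<^sub>i x\<^sub>i = 1\<close>. That cross sum is symmetric in \<open>x\<close> and \<open>y\<close>, so \<open>H(x) = H(y)\<close>. If
  \<open>c\<close> vanishes somewhere on \<open>S\<close>, the equilibrium condition gives \<open>H(x) = H(y) = 0\<close> directly.\<close>

lemma sum_marg:
  fixes x :: "'v::finite \<times> 'v \<Rightarrow> real"
  shows "(\<Sum>i\<in>UNIV. marg x i) = (\<Sum>ij\<in>UNIV. x ij)"
  by (simp add: marg_def sum.cartesian_product flip: UNIV_Times_UNIV)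

lemma marg_ge_entry:
  assumes "\<And>ij. x ij \<ge> 0"
  shows "x (i, j) \<le> marg x i"
  unfolding marg_def by (rule member_le_sum) (auto simp: assms)

lemma marg_eq_0_iff:
  assumes "\<And>ij. x ij \<ge> 0"
  shows "marg x i = 0 \<longleftrightarrow> (\<forall>j. x (i, j) = 0)"
  unfolding marg_def using assms by (simp add: sum_nonneg_eq_0_iff)

definition cross_sum :: "('v::finite \<times> 'v \<Rightarrow> real) \<Rightarrow> ('v \<times> 'v) set
    \<Rightarrow> ('v \<times> 'v \<Rightarrow> real) \<Rightarrow> ('v \<times> 'v \<Rightarrow> real) \<Rightarrow> real" where
  "cross_sum c S x y = (\<Sum>(i, j)\<in>S. marg x i * marg y j / c (i, j))"

lemma cross_sum_commute:
  assumes "\<And>i j. c (i, j) = c (j, i)" and "\<And>i j. (i, j) \<in> S \<longleftrightarrow> (j, i) \<in> S"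
  shows "cross_sum c S x y = cross_sum c S y x"
  unfolding cross_sum_def
  by (rule sum.reindex_bij_witness[of _ prod.swap prod.swap])
     (auto simp: assms mult.commute)

lemma equilibrium_cross_sum:
  fixes x y c :: "'v::finite \<times> 'v \<Rightarrow> real"
  assumes x_nonneg: "\<And>ij. x ij \<ge> 0" and x_sum: "(\<Sum>ij\<in>UNIV. x ij) = 1"
    and y_nonneg: "\<And>ij. y ij \<ge> 0" and y_sym: "\<And>i j. y (i, j) = y (j, i)"
    and supp: "\<And>ij. x ij > 0 \<Longrightarrow> y ij > 0"
    and crit: "\<And>i j. y (i, j) > 0 \<Longrightarrow> c (i, j) * y (i, j) / (marg y i * marg y j) = H"
    and c_nz: "\<And>ij. y ij > 0 \<Longrightarrow> c ij \<noteq> 0"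
  shows "H * cross_sum c {ij. y ij > 0} x y = 1"
proof -
  let ?S = "{ij. y ij > 0}"
  let ?g = "\<lambda>(i, j). marg x i * y (i, j) / marg y i"
  have entry: "H * (marg x i * marg y j / c (i, j)) = ?g (i, j)" if "y (i, j) > 0" for i j
  proof -
    have "marg y i > 0" "marg y j > 0"
      using marg_ge_entry[where x = y, OF y_nonneg, of i j]
        marg_ge_entry[where x = y, OF y_nonneg, of j i] that y_sym[of i j]
      by auto
    with crit[OF that] c_nz[OF that] show ?thesis
      by (auto simp: field_simps)
  qed
  have row: "(\<Sum>j\<in>UNIV. ?g (i, j)) = marg x i" for i
  proof (cases "marg y i = 0")
    case True
    then have "x (i, j) = 0" for j
      using supp[of "(i, j)"] x_nonneg[of "(i, j)"] marg_eq_0_iff[OF y_nonneg] by force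
    then show ?thesis by (simp add: marg_def)
  next
    case False
    have "(\<Sum>j\<in>UNIV. ?g (i, j)) = marg x i * marg y i / marg y i"
      by (simp add: marg_def [of y] sum_distrib_left sum_divide_distrib)
    with False show ?thesis by simp
  qed
  have "H * cross_sum c ?S x y = (\<Sum>ij\<in>?S. ?g ij)"
    unfolding cross_sum_def sum_distrib_left
    by (rule sum.cong) (auto simp del: times_divide_eq_right simp: entry)
  also have "\<dots> = (\<Sum>ij\<in>UNIV. ?g ij)"
    by (rule sum.mono_neutral_left) (use y_nonneg in \<open>force simp: le_less\<close>)+
  also have "\<dots> = (\<Sum>i\<in>UNIV. \<Sum>j\<in>UNIV. ?g (i, j))"
    by (simp add: sum.cartesian_product flip: UNIV_Times_UNIV)
  also have "\<dots> = 1"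
    using row sum_marg[of x] x_sum by simp
  finally show ?thesis .
qed

lemma GammaD:
  assumes "x \<in> Gamma adj a p h1"
  shows "\<And>ij. x ij \<ge> 0" and "\<And>i j. x (i, j) = x (j, i)" and "(\<Sum>ij\<in>UNIV. x ij) = 1"
    and "\<And>i j. \<not> adj i j \<Longrightarrow> x (i, j) = 0"
    and "\<And>i j. x (i, j) > 0 \<Longrightarrow> a (i, j) * p (i, j) * x (i, j) / (marg x i * marg x j) = Hfun a p x"
proof -
  have "x \<in> Delta adj a p h1" and F: "Ffun a p x = (\<lambda>_. 0)"
    using assms by (auto simp: Gamma_def)
  then show "\<And>ij. x ij \<ge> 0" and "\<And>i j. x (i, j) = x (j, i)" and "(\<Sum>ij\<in>UNIV. x ij) = 1"
    and "\<And>i j. \<not> adj i j \<Longrightarrow> x (i, j) = 0"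
    by (auto simp: Delta_def)
  fix i j assume "x (i, j) > 0"
  with fun_cong[OF F, of "(i, j)"]
  show "a (i, j) * p (i, j) * x (i, j) / (marg x i * marg x j) = Hfun a p x"
    by (simp add: Ffun_def)
qed

lemma positive_if_supp_edges_eq:
  assumes "x \<in> Gamma adj a p h1" and "y \<in> Gamma adj a p h1"
    and "supp_edges adj x = supp_edges adj y" and "x (i, j) > 0"
  shows "y (i, j) > 0"
proof -
  have "adj i j" using GammaD(4)[OF assms(1), of i j] assms(4) by force
  then have "{i, j} \<in> supp_edges adj x" using assms(4) by (auto simp: supp_edges_def)
  then have "{i, j} \<in> supp_edges adj y" using assms(3) by simp
  then obtain k l where "{i, j} = {k, l}" and "y (k, l) > 0"
    by (auto simp: supp_edges_def)
  then show ?thesis using GammaD(2)[OF assms(2), of k l] by (auto simp: doubleton_eq_iff)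
qed

lemma Hfun_eq_if_same_support:
  assumes a_sym: "\<And>i j. a (i, j) = a (j, i)" and p_sym: "\<And>i j. p (i, j) = p (j, i)"
    and x: "x \<in> Gamma adj a p h1" and y: "y \<in> Gamma adj a p h1"
    and supp: "\<And>ij. x ij > 0 \<longleftrightarrow> y ij > 0"
  shows "Hfun a p y = Hfun a p x"
proof (cases "\<exists>ij. y ij > 0 \<and> a ij * p ij = 0")
  case True
  then obtain i j where "y (i, j) > 0" "x (i, j) > 0" "a (i, j) * p (i, j) = 0"
    using supp by auto
  then show ?thesis using GammaD(5)[OF x, of i j] GammaD(5)[OF y, of i j] by auto
next
  case False
  define c where "c = (\<lambda>ij. a ij * p ij)"
  let ?S = "{ij. y ij > 0}"
  have "Hfun a p y * cross_sum c ?S x y = 1"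
    by (rule equilibrium_cross_sum) (use False supp GammaD[OF x] GammaD[OF y] in \<open>auto simp: c_def\<close>)
  moreover have "Hfun a p x * cross_sum c ?S y x = 1"
    using equilibrium_cross_sum[of y x c "Hfun a p x"] False supp GammaD[OF x] GammaD[OF y]
    by (auto simp: c_def)
  moreover have "cross_sum c ?S y x = cross_sum c ?S x y"
    by (rule cross_sum_commute) (auto simp: c_def a_sym p_sym GammaD(2)[OF y])
  ultimately show ?thesis by (metis mult_cancel_right mult_zero_left zero_neq_one)
qed

theorem lemma8:
  fixes adj :: "'v::finite \<Rightarrow> 'v \<Rightarrow> bool"
    and a p :: "'v \<times> 'v \<Rightarrow> real" and h1 :: real and \<theta> :: "'v set set"
  assumes adj_sym: "\<And>i j. adj i j = adj j i"
    and a_sym: "\<And>i j. a (i, j) = a (j, i)" and a_nonneg: "\<And>i j. a (i, j) \<ge> 0"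
    and a_adj: "\<And>i j. a (i, j) > 0 \<Longrightarrow> adj i j"
    and p_sym: "\<And>i j. p (i, j) = p (j, i)"
    and p_range: "\<And>i j. 0 \<le> p (i, j) \<and> p (i, j) \<le> 1"
    and p_adj: "\<And>i j. \<not> adj i j \<Longrightarrow> p (i, j) = 0"
    and ap_pos: "\<exists>i j. a (i, j) * p (i, j) > 0"
    and h1: "0 < h1" "h1 \<le> 1"
    and theta: "\<theta> \<subseteq> edge_set adj"
    and x: "x \<in> Gamma_theta adj a p h1 \<theta>"
    and y: "y \<in> connected_component_set (Gamma_theta adj a p h1 \<theta>) x"
  shows "Hfun a p y = Hfun a p x"
proof -
  have "y \<in> Gamma_theta adj a p h1 \<theta>"
    using y connected_component_subset by blast
  with x have xG: "x \<in> Gamma adj a p h1" and yG: "y \<in> Gamma adj a p h1"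
    and "supp_edges adj x = supp_edges adj y"
    by (auto simp: Gamma_theta_def)
  then have "x ij > 0 \<longleftrightarrow> y ij > 0" for ij
    using positive_if_supp_edges_eq[OF xG yG] positive_if_supp_edges_eq[OF yG xG]
    by (cases ij) auto
  then show ?thesis by (rule Hfun_eq_if_same_support[OF a_sym p_sym xG yG])
qed

end
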